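(* A regular language is $\mathcal{R}$-trivial if and only if it is accepted by an rpoNFA.
   Context: An NFA is $\mathcal{A}=(Q,\Sigma,\cdot,I,F)$ with transition function $\cdot:Q\times\Sigma\to 2^Q$. State $q$ is reachable from $p$ ($p\le q$) if $q\in p\cdot w$ for some word $w$; a poNFA is an NFA for which $\le$ is a partial order. A restricted poNFA (rpoNFA) is a poNFA such that for every state $q$ and symbol $a$, if $q\in q\cdot a$ then $q\cdot a=\{q\}$. For words, $v=a_1\cdots a_n$ is a subsequence of $w$ ($v\preccurlyeq w$) if $w\in\Sigma^*a_1\Sigma^*\cdots\Sigma^*a_n\Sigma^*$; $\mathrm{sub}_k(v)=\{u\mid u\preccurlyeq v,\ |u|\le k\}$; $w_1\sim_k w_2$ iff $\mathrm{sub}_k(w_1)=\mathrm{sub}_k(w_2)$. For $k\ge0$, $x\sim^{\mathcal{R}}_k y$ iff for each prefix $u$ of $x$ there is a prefix $v$ of $y$ with $u\sim_k v$, and for each prefix $v$ of $y$ there is a prefix $u$ of $x$ with $u\sim_k v$. A regular language is $k$-$\mathcal{R}$-trivial if it is a union of $\sim^{\mathcal{R}}_k$-classes, and $\mathcal{R}$-trivial if it is $k$-$\mathcal{R}$-trivial for some $k\ge0$. *)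

theory Defs
  imports Main "HOL-Library.Sublist"
begin

record ('q, 'a) nfa =
  states :: "'q set"
  alphabet :: "'a set"
  delta :: "'q \<Rightarrow> 'a \<Rightarrow> 'q set"
  initial :: "'q set"
  final :: "'q set"

definition wf_nfa :: "('q, 'a) nfa \<Rightarrow> bool" where
  "wf_nfa A \<longleftrightarrow> finite (states A) \<and> finite (alphabet A)
     \<and> initial A \<subseteq> states A \<and> final A \<subseteq> states A
     \<and> (\<forall>q \<in> states A. \<forall>a \<in> alphabet A. delta A q a \<subseteq> states A)"

fun delta_star :: "('q, 'a) nfa \<Rightarrow> 'q \<Rightarrow> 'a list \<Rightarrow> 'q set" where
  "delta_star A q [] = {q}"
| "delta_star A q (a # w) = (\<Union>p \<in> delta A q a. delta_star A p w)"

definition nfa_lang :: "('q, 'a) nfa \<Rightarrow> 'a list set" where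
  "nfa_lang A = {w \<in> lists (alphabet A). \<exists>i \<in> initial A. delta_star A i w \<inter> final A \<noteq> {}}"

definition reach :: "('q, 'a) nfa \<Rightarrow> 'q \<Rightarrow> 'q \<Rightarrow> bool" where
  "reach A p q \<longleftrightarrow> (\<exists>w \<in> lists (alphabet A). q \<in> delta_star A p w)"

text \<open>poNFA: reachability is a partial order on the states (reflexivity and
  transitivity hold automatically, so the condition is antisymmetry).\<close>
definition poNFA :: "('q, 'a) nfa \<Rightarrow> bool" where
  "poNFA A \<longleftrightarrow> wf_nfa A \<and>
     (\<forall>p \<in> states A. \<forall>q \<in> states A. reach A p q \<and> reach A q p \<longrightarrow> p = q)"

definition rpoNFA :: "('q, 'a) nfa \<Rightarrow> bool" where
  "rpoNFA A \<longleftrightarrow> poNFA A \<and>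
     (\<forall>q \<in> states A. \<forall>a \<in> alphabet A. q \<in> delta A q a \<longrightarrow> delta A q a = {q})"

text \<open>Regular languages over a finite alphabet Sigma: accepted by some NFA
  (state set taken, without loss of generality, inside nat).\<close>
definition regular :: "'a set \<Rightarrow> 'a list set \<Rightarrow> bool" where
  "regular \<Sigma> L \<longleftrightarrow> (\<exists>A :: (nat, 'a) nfa. wf_nfa A \<and> alphabet A = \<Sigma> \<and> nfa_lang A = L)"

definition sub_k :: "nat \<Rightarrow> 'a list \<Rightarrow> 'a list set" where
  "sub_k k v = {u. subseq u v \<and> length u \<le> k}"

definition sim_k :: "nat \<Rightarrow> 'a list \<Rightarrow> 'a list \<Rightarrow> bool" where
  "sim_k k w1 w2 \<longleftrightarrow> sub_k k w1 = sub_k k w2"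

definition simR_k :: "nat \<Rightarrow> 'a list \<Rightarrow> 'a list \<Rightarrow> bool" where
  "simR_k k x y \<longleftrightarrow>
     (\<forall>u. prefix u x \<longrightarrow> (\<exists>v. prefix v y \<and> sim_k k u v)) \<and>
     (\<forall>v. prefix v y \<longrightarrow> (\<exists>u. prefix u x \<and> sim_k k u v))"

definition k_R_trivial :: "'a set \<Rightarrow> nat \<Rightarrow> 'a list set \<Rightarrow> bool" where
  "k_R_trivial \<Sigma> k L \<longleftrightarrow> L \<subseteq> lists \<Sigma> \<and>
     (\<forall>x \<in> lists \<Sigma>. \<forall>y \<in> lists \<Sigma>. simR_k k x y \<longrightarrow> (x \<in> L \<longleftrightarrow> y \<in> L))"

definition R_trivial :: "'a set \<Rightarrow> 'a list set \<Rightarrow> bool" where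
  "R_trivial \<Sigma> L \<longleftrightarrow> (\<exists>k. k_R_trivial \<Sigma> k L)"

end

theory Submission
  imports Defs
begin

text \<open>
  If A is an rpoNFA, let q be a state and S the set of letters that loop in q. Reading a word x
  from q, the automaton stays in q up to the first letter a \<notin> S and then moves to states p \<noteq> q
  from which strictly fewer states are reachable. If x ~R_(k+1) y, then y has the same first
  letter outside S and the two suffixes after it are ~R_k-equivalent; by induction on the number of
  states reachable from q, x and y are accepted from q alike. Hence L(A) is
  |Q|-R-trivial.

  Conversely, the set of the sub_k-sets of the prefixes of x determines the ~R_k-class of x, and
  it can be updated letter by letter. The automaton on these sets is deterministic, has finitely
  many states and only ever adds elements to its state, so it is an rpoNFA; it accepts L when L
  is a union of ~R_k-classes.
\<close>

section \<open>Subsequences and the relation ~R_k\<close>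

lemma simR_k_sym: "simR_k k x y \<Longrightarrow> simR_k k y x"
  unfolding simR_k_def sim_k_def by metis

lemma set_eq_if_sub_k_Suc_eq:
  assumes "sub_k (Suc k) x = sub_k (Suc k) y"
  shows "set x = set y"
proof -
  have "c \<in> set w \<longleftrightarrow> [c] \<in> sub_k (Suc k) w" for c and w :: "'a list"
    by (simp add: sub_k_def subseq_singleton_left)
  then show ?thesis using assms by blast
qed

lemma set_subset_if_simR_k_Suc:
  assumes "simR_k (Suc k) x y"
  shows "set x \<subseteq> set y"
proof -
  obtain v where "prefix v y" "sub_k (Suc k) x = sub_k (Suc k) v"
    using assms unfolding simR_k_def sim_k_def by blast
  then show ?thesis using set_eq_if_sub_k_Suc_eq set_mono_prefix by blast
qed

lemma set_eq_if_simR_k_Suc: "simR_k (Suc k) x y \<Longrightarrow> set x = set y"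
  using set_subset_if_simR_k_Suc simR_k_sym by blast

lemma Cons_mem_sub_k_Suc_iff:
  assumes "a \<notin> set u"
  shows "a # s \<in> sub_k (Suc k) (u @ a # p) \<longleftrightarrow> s \<in> sub_k k p"
proof -
  have "subseq (a # s) (u @ a # p) \<longleftrightarrow> subseq s p"
    using assms by (induction u) auto
  then show ?thesis by (simp add: sub_k_def)
qed

lemma prefix_append_Cons_cases:
  assumes "prefix z (u @ b # v)" and "\<not> set z \<subseteq> set u"
  obtains p where "z = u @ b # p" and "prefix p v"
proof -
  obtain r where r: "z = u @ r" "prefix r (b # v)"
    using assms set_mono_prefix by (auto simp: prefix_append)
  then show thesis using assms(2) that by (cases r) auto
qed

lemma simR_k_Suc_tail_half:
  assumes sim: "simR_k (Suc k) (u @ a # v) (u' @ a # v')"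
    and a: "a \<notin> set u" "a \<notin> set u'" and p: "prefix p v"
  shows "\<exists>p'. prefix p' v' \<and> sim_k k p p'"
proof -
  have "prefix (u @ a # p) (u @ a # v)" using p by simp
  then obtain z where z: "prefix z (u' @ a # v')" "sub_k (Suc k) (u @ a # p) = sub_k (Suc k) z"
    using sim unfolding simR_k_def sim_k_def by blast
  have "a \<in> set z" unfolding set_eq_if_sub_k_Suc_eq[OF z(2), symmetric] by simp
  then obtain p' where p': "z = u' @ a # p'" "prefix p' v'"
    using prefix_append_Cons_cases[OF z(1)] a(2) by blast
  have "sub_k k p = sub_k k p'"
    using z(2) Cons_mem_sub_k_Suc_iff[OF a(1)] Cons_mem_sub_k_Suc_iff[OF a(2)]
    unfolding p'(1) by blast
  then show ?thesis using p'(2) sim_k_def by blast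
qed

lemma simR_k_Suc_tail:
  assumes "simR_k (Suc k) (u @ a # v) (u' @ a # v')" and "a \<notin> set u" "a \<notin> set u'"
  shows "simR_k k v v'"
  using simR_k_Suc_tail_half[OF assms] simR_k_Suc_tail_half[OF simR_k_sym[OF assms(1)] assms(3,2)]
  unfolding simR_k_def sim_k_def by metis

lemma simR_k_Suc_first_letter_outside:
  assumes sim: "simR_k (Suc k) (u @ a # v) y" and u: "set u \<subseteq> S" and a: "a \<notin> S"
  obtains u' v' where "y = u' @ a # v'" and "set u' \<subseteq> S" and "simR_k k v v'"
proof -
  have "\<exists>c \<in> set y. c \<notin> S" using set_eq_if_simR_k_Suc[OF sim] a by auto
  then obtain u' b v' where y: "y = u' @ b # v'" and b: "b \<notin> S" and u': "set u' \<subseteq> S"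
    using split_list_first_prop[of y "\<lambda>c. c \<notin> S"] by blast
  have "prefix (u @ [a]) (u @ a # v)" by simp
  then obtain z where z: "prefix z (u' @ b # v')" "sub_k (Suc k) (u @ [a]) = sub_k (Suc k) z"
    using sim unfolding y simR_k_def sim_k_def by blast
  have set_z: "set z = insert a (set u)" using set_eq_if_sub_k_Suc_eq[OF z(2)] by simp
  then obtain p where "z = u' @ b # p"
    using prefix_append_Cons_cases[OF z(1)] u' a by blast
  then have "b = a" using set_z u b by auto
  moreover have "a \<notin> set u" "a \<notin> set u'" using u u' a by auto
  ultimately have "simR_k k v v'" using simR_k_Suc_tail[of k u a v u' v'] sim unfolding y by simp
  then show thesis using that y u' \<open>b = a\<close> by blast
qed

section \<open>Runs and reachability\<close>

lemma delta_star_append: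
  "delta_star A q (u @ w) = (\<Union>p \<in> delta_star A q u. delta_star A p w)"
  by (induction u arbitrary: q) auto

lemma delta_star_subset_states:
  assumes "wf_nfa A" "q \<in> states A" "w \<in> lists (alphabet A)"
  shows "delta_star A q w \<subseteq> states A"
  using assms(2,3)
proof (induction w arbitrary: q)
  case (Cons a w)
  then have "delta A q a \<subseteq> states A" using assms(1) by (auto simp: wf_nfa_def)
  then show ?case using Cons by auto
qed simp

lemma delta_star_loops:
  "\<forall>c \<in> set w. delta A q c = {q} \<Longrightarrow> delta_star A q w = {q}"
  by (induction w) auto

lemma reach_refl: "reach A q q"
  unfolding reach_def by (auto intro: bexI[of _ "[]"])

lemma reach_delta: "a \<in> alphabet A \<Longrightarrow> p \<in> delta A q a \<Longrightarrow> reach A q p"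
  unfolding reach_def by (auto intro: bexI[of _ "[a]"])

lemma reach_trans:
  assumes "reach A p q" "reach A q r"
  shows "reach A p r"
proof -
  obtain w w' where "w \<in> lists (alphabet A)" "q \<in> delta_star A p w"
    "w' \<in> lists (alphabet A)" "r \<in> delta_star A q w'"
    using assms unfolding reach_def by blast
  then show ?thesis unfolding reach_def
    by (intro bexI[of _ "w @ w'"]) (auto simp: delta_star_append)
qed

lemma card_reach_delta_less:
  assumes po: "poNFA A" and q: "q \<in> states A" and a: "a \<in> alphabet A"
    and p: "p \<in> delta A q a" and "p \<noteq> q"
  shows "card {r \<in> states A. reach A p r} < card {r \<in> states A. reach A q r}"
proof (rule psubset_card_mono)
  have wf: "wf_nfa A" using po by (simp add: poNFA_def)
  then show "finite {r \<in> states A. reach A q r}" by (simp add: wf_nfa_def)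
  have qp: "reach A q p" using reach_delta[OF a p] .
  have "p \<in> states A" using wf q a p unfolding wf_nfa_def by blast
  then have "\<not> reach A p q" using po q qp \<open>p \<noteq> q\<close> by (auto simp: poNFA_def)
  then show "{r \<in> states A. reach A p r} \<subset> {r \<in> states A. reach A q r}"
    using q qp reach_refl[of A q] reach_trans[OF qp] by blast
qed

section \<open>Languages of rpoNFAs are R-trivial\<close>

definition accepts_from :: "('q, 'a) nfa \<Rightarrow> 'q \<Rightarrow> 'a list \<Rightarrow> bool" where
  "accepts_from A q w \<longleftrightarrow> delta_star A q w \<inter> final A \<noteq> {}"

lemma accepts_from_Cons: "accepts_from A q (a # w) \<longleftrightarrow> (\<exists>p \<in> delta A q a. accepts_from A p w)"
  by (auto simp: accepts_from_def)

lemma accepts_from_append: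
  "accepts_from A q (u @ w) \<longleftrightarrow> (\<exists>p \<in> delta_star A q u. accepts_from A p w)"
  by (auto simp: accepts_from_def delta_star_append)

lemma rpoNFA_accepts_from_simR_k:
  assumes rpo: "rpoNFA A"
  shows "q \<in> states A \<Longrightarrow> card {p \<in> states A. reach A q p} \<le> k \<Longrightarrow>
    x \<in> lists (alphabet A) \<Longrightarrow> y \<in> lists (alphabet A) \<Longrightarrow> simR_k k x y \<Longrightarrow>
    accepts_from A q x \<longleftrightarrow> accepts_from A q y"
proof (induction k arbitrary: q x y)
  case 0
  have "finite (states A)" using rpo by (simp add: rpoNFA_def poNFA_def wf_nfa_def)
  moreover have "q \<in> {p \<in> states A. reach A q p}" using "0.prems"(1) reach_refl by fast
  ultimately have "card {p \<in> states A. reach A q p} \<noteq> 0" by auto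
  then show ?case using "0.prems"(2) by simp
next
  case (Suc k)
  have po: "poNFA A" and wf: "wf_nfa A" using rpo by (simp_all add: rpoNFA_def poNFA_def)
  define S where "S = {c. delta A q c = {q}}"
  show ?case
  proof (cases "set x \<subseteq> S")
    case True
    then have "set y \<subseteq> S" using set_eq_if_simR_k_Suc[OF Suc.prems(5)] by simp
    then have "delta_star A q x = {q}" "delta_star A q y = {q}"
      using True by (auto intro!: delta_star_loops simp: S_def)
    then show ?thesis by (simp add: accepts_from_def)
  next
    case False
    then obtain u a v where x: "x = u @ a # v" and a: "a \<notin> S" and u: "set u \<subseteq> S"
      using split_list_first_prop[of x "\<lambda>c. c \<notin> S"] by blast
    obtain u' v' where y: "y = u' @ a # v'" and u': "set u' \<subseteq> S" and vv': "simR_k k v v'"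
      using simR_k_Suc_first_letter_outside[OF Suc.prems(5)[unfolded x] u a] .
    have a_in: "a \<in> alphabet A" using Suc.prems(3) x by simp
    have "q \<notin> delta A q a" using rpo Suc.prems(1) a_in a by (auto simp: rpoNFA_def S_def)
    have IH: "accepts_from A p v \<longleftrightarrow> accepts_from A p v'" if p: "p \<in> delta A q a" for p
    proof (rule Suc.IH)
      show "p \<in> states A" using wf Suc.prems(1) a_in p unfolding wf_nfa_def by blast
      show "card {r \<in> states A. reach A p r} \<le> k"
        using card_reach_delta_less[OF po Suc.prems(1) a_in p] \<open>q \<notin> delta A q a\<close> p
          Suc.prems(2) by fastforce
      show "v \<in> lists (alphabet A)" "v' \<in> lists (alphabet A)"
        using Suc.prems(3,4) x y by auto
    qed (rule vv')
    have "delta_star A q u = {q}" "delta_star A q u' = {q}"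
      using u u' by (auto intro!: delta_star_loops simp: S_def)
    then show ?thesis using IH by (simp add: x y accepts_from_append accepts_from_Cons)
  qed
qed

lemma rpoNFA_R_trivial:
  assumes "rpoNFA A"
  shows "R_trivial (alphabet A) (nfa_lang A)"
proof -
  let ?k = "card (states A)"
  have fin: "finite (states A)" and init: "initial A \<subseteq> states A"
    using assms by (auto simp: rpoNFA_def poNFA_def wf_nfa_def)
  have "k_R_trivial (alphabet A) ?k (nfa_lang A)"
    unfolding k_R_trivial_def
  proof (intro conjI ballI impI)
    show "nfa_lang A \<subseteq> lists (alphabet A)" by (auto simp: nfa_lang_def)
    fix x y assume "x \<in> lists (alphabet A)" "y \<in> lists (alphabet A)" "simR_k ?k x y"
    moreover have "card {p \<in> states A. reach A q p} \<le> ?k" for q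
      using fin by (auto intro: card_mono)
    ultimately have "accepts_from A i x \<longleftrightarrow> accepts_from A i y" if "i \<in> initial A" for i
      using rpoNFA_accepts_from_simR_k[OF assms] init that by blast
    then show "x \<in> nfa_lang A \<longleftrightarrow> y \<in> nfa_lang A"
      using \<open>x \<in> lists (alphabet A)\<close> \<open>y \<in> lists (alphabet A)\<close>
      by (auto simp: nfa_lang_def accepts_from_def)
  qed
  then show ?thesis unfolding R_trivial_def by blast
qed

section \<open>An rpoNFA for a k-R-trivial language\<close>

definition snoc_subs :: "nat \<Rightarrow> 'a list set \<Rightarrow> 'a \<Rightarrow> 'a list set" where
  "snoc_subs k T a = T \<union> {s @ [a] | s. s \<in> T \<and> length s < k}"

lemma subseq_snoc_iff:
  "subseq s (x @ [a]) \<longleftrightarrow> subseq s x \<or> (\<exists>s'. s = s' @ [a] \<and> subseq s' x)"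
proof -
  have "subseq t [a] \<longleftrightarrow> t = [] \<or> t = [a]" for t by (cases t) auto
  then show ?thesis
    by (simp add: subseq_append_iff conj_disj_distribL conj_disj_distribR ex_disj_distrib)
qed

lemma sub_k_snoc: "sub_k k (x @ [a]) = snoc_subs k (sub_k k x) a"
  by (auto simp: sub_k_def snoc_subs_def subseq_snoc_iff)

definition prefix_subs :: "nat \<Rightarrow> 'a list \<Rightarrow> 'a list set set" where
  "prefix_subs k x = {sub_k k u | u. prefix u x}"

lemma prefix_subs_subset_iff:
  "prefix_subs k x \<subseteq> prefix_subs k y \<longleftrightarrow>
    (\<forall>u. prefix u x \<longrightarrow> (\<exists>v. prefix v y \<and> sub_k k v = sub_k k u))"
  unfolding prefix_subs_def by (auto simp: subset_eq) (metis+)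

lemma simR_k_iff_prefix_subs_eq: "simR_k k x y \<longleftrightarrow> prefix_subs k x = prefix_subs k y"
  unfolding simR_k_def sim_k_def set_eq_subset prefix_subs_subset_iff
  by (metis (no_types, opaque_lifting))

lemma Union_prefix_subs: "\<Union>(prefix_subs k x) = sub_k k x"
  unfolding prefix_subs_def sub_k_def using prefix_imp_subseq subseq_order.trans by blast

lemma prefix_subs_snoc: "prefix_subs k (x @ [a]) = insert (sub_k k (x @ [a])) (prefix_subs k x)"
  unfolding prefix_subs_def by auto

lemma prefix_subs_append_mono: "prefix_subs k x \<subseteq> prefix_subs k (x @ w)"
  unfolding prefix_subs_def by (auto intro: prefix_order.trans)

lemma finite_prefix_subs_image:
  assumes "finite \<Sigma>"
  shows "finite (prefix_subs k ` lists \<Sigma>)"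
proof -
  define B where "B = {xs. set xs \<subseteq> \<Sigma> \<and> length xs \<le> k}"
  have "set s \<subseteq> set u" if "subseq s u" for s u :: "'a list"
    using that set_nths_subset by (metis subseq_conv_nths)
  then have "sub_k k u \<subseteq> B" if "set u \<subseteq> \<Sigma>" for u
    using that unfolding B_def sub_k_def by blast
  then have "prefix_subs k x \<subseteq> Pow B" if "set x \<subseteq> \<Sigma>" for x
    unfolding prefix_subs_def using that set_mono_prefix by blast
  then have "prefix_subs k ` lists \<Sigma> \<subseteq> Pow (Pow B)" by auto
  moreover have "finite B" using finite_lists_length_le[OF assms] by (simp add: B_def)
  ultimately show ?thesis by (simp add: finite_subset)
qed

text \<open>The transitions are computed from the state alone, since \<open>\<Union>(prefix_subs k x) = sub_k k x\<close>.\<close>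

definition prefix_subs_nfa :: "'a set \<Rightarrow> nat \<Rightarrow> 'a list set \<Rightarrow> ('a list set set, 'a) nfa" where
  "prefix_subs_nfa \<Sigma> k L =
     \<lparr>states = prefix_subs k ` lists \<Sigma>, alphabet = \<Sigma>,
      delta = (\<lambda>P a. {insert (snoc_subs k (\<Union>P) a) P}),
      initial = {prefix_subs k []}, final = prefix_subs k ` L\<rparr>"

lemma delta_star_prefix_subs_nfa:
  "delta_star (prefix_subs_nfa \<Sigma> k L) (prefix_subs k x) w = {prefix_subs k (x @ w)}"
proof (induction w arbitrary: x)
  case (Cons a w)
  have "delta (prefix_subs_nfa \<Sigma> k L) (prefix_subs k x) a = {prefix_subs k (x @ [a])}"
    by (simp add: prefix_subs_nfa_def Union_prefix_subs prefix_subs_snoc sub_k_snoc)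
  then show ?case using Cons.IH[of "x @ [a]"] by simp
qed simp

lemma rpoNFA_prefix_subs_nfa:
  assumes "finite \<Sigma>" and "L \<subseteq> lists \<Sigma>"
  shows "rpoNFA (prefix_subs_nfa \<Sigma> k L)"
proof -
  let ?D = "prefix_subs_nfa \<Sigma> k L"
  have delta: "delta ?D (prefix_subs k x) a = {prefix_subs k (x @ [a])}" for x a
    using delta_star_prefix_subs_nfa[of \<Sigma> k L x "[a]"] by simp
  have "wf_nfa ?D"
    unfolding wf_nfa_def
  proof (intro conjI ballI)
    show "finite (states ?D)" "finite (alphabet ?D)"
      using assms(1) finite_prefix_subs_image by (simp_all add: prefix_subs_nfa_def)
    show "initial ?D \<subseteq> states ?D" "final ?D \<subseteq> states ?D"
      using assms(2) by (auto simp: prefix_subs_nfa_def)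
    fix P a assume "P \<in> states ?D" "a \<in> alphabet ?D"
    then obtain x where x: "x \<in> lists \<Sigma>" "P = prefix_subs k x" and "a \<in> \<Sigma>"
      by (auto simp: prefix_subs_nfa_def)
    then have "prefix_subs k (x @ [a]) \<in> states ?D" by (simp add: prefix_subs_nfa_def)
    then show "delta ?D P a \<subseteq> states ?D" using delta x(2) by simp
  qed
  moreover have "P \<subseteq> P'" if P: "P \<in> states ?D" and PP': "reach ?D P P'" for P P'
  proof -
    obtain x where "P = prefix_subs k x" using P by (auto simp: prefix_subs_nfa_def)
    moreover obtain w where "P' \<in> delta_star ?D P w" using PP' by (auto simp: reach_def)
    ultimately show ?thesis by (simp add: delta_star_prefix_subs_nfa prefix_subs_append_mono)
  qed
  ultimately have "poNFA ?D" by (auto simp: poNFA_def)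
  then show ?thesis by (simp add: rpoNFA_def prefix_subs_nfa_def)
qed

lemma nfa_lang_prefix_subs_nfa:
  assumes L: "k_R_trivial \<Sigma> k L"
  shows "nfa_lang (prefix_subs_nfa \<Sigma> k L) = L"
proof -
  let ?D = "prefix_subs_nfa \<Sigma> k L"
  have "delta_star ?D (prefix_subs k []) w = {prefix_subs k w}" for w
    using delta_star_prefix_subs_nfa[of \<Sigma> k L "[]" w] by simp
  moreover have "initial ?D = {prefix_subs k []}" "final ?D = prefix_subs k ` L" "alphabet ?D = \<Sigma>"
    by (simp_all add: prefix_subs_nfa_def)
  ultimately have D: "nfa_lang ?D = {w \<in> lists \<Sigma>. \<exists>y \<in> L. prefix_subs k w = prefix_subs k y}"
    unfolding nfa_lang_def by auto
  have L_sub: "L \<subseteq> lists \<Sigma>" using L by (simp add: k_R_trivial_def)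
  have "w \<in> L" if "w \<in> lists \<Sigma>" "y \<in> L" "prefix_subs k w = prefix_subs k y" for w y
    using L that L_sub unfolding k_R_trivial_def simR_k_iff_prefix_subs_eq[symmetric] by blast
  then show ?thesis unfolding D using L_sub by blast
qed

section \<open>Renaming the states of an automaton\<close>

definition rename_nfa :: "('q \<Rightarrow> 'r) \<Rightarrow> ('q, 'a) nfa \<Rightarrow> ('r, 'a) nfa" where
  "rename_nfa f A =
     \<lparr>states = f ` states A, alphabet = alphabet A,
      delta = (\<lambda>q a. f ` delta A (the_inv_into (states A) f q) a),
      initial = f ` initial A, final = f ` final A\<rparr>"

lemma rename_nfa_simps [simp]:
  "states (rename_nfa f A) = f ` states A" "alphabet (rename_nfa f A) = alphabet A"
  "initial (rename_nfa f A) = f ` initial A" "final (rename_nfa f A) = f ` final A"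
  by (simp_all add: rename_nfa_def)

context
  fixes f :: "'q \<Rightarrow> 'r" and A :: "('q, 'a) nfa"
  assumes wf: "wf_nfa A" and inj: "inj_on f (states A)"
begin

lemma delta_rename_nfa: "q \<in> states A \<Longrightarrow> delta (rename_nfa f A) (f q) a = f ` delta A q a"
  using the_inv_into_f_f[OF inj] by (simp add: rename_nfa_def)

lemma delta_star_rename_nfa:
  "q \<in> states A \<Longrightarrow> w \<in> lists (alphabet A) \<Longrightarrow>
    delta_star (rename_nfa f A) (f q) w = f ` delta_star A q w"
proof (induction w arbitrary: q)
  case (Cons a w)
  have "delta A q a \<subseteq> states A" using wf Cons.prems unfolding wf_nfa_def by simp
  then have "delta_star (rename_nfa f A) (f q) (a # w) =
      (\<Union>p \<in> delta A q a. f ` delta_star A p w)"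
    using Cons by (auto simp: delta_rename_nfa intro!: SUP_cong)
  then show ?case by (simp add: image_UN)
qed simp

lemma mem_delta_star_rename_nfa_iff:
  assumes "p \<in> states A" "q \<in> states A" "w \<in> lists (alphabet A)"
  shows "f q \<in> delta_star (rename_nfa f A) (f p) w \<longleftrightarrow> q \<in> delta_star A p w"
  using assms delta_star_rename_nfa delta_star_subset_states[OF wf] inj
  by (simp add: inj_on_image_mem_iff)

lemma wf_nfa_rename_nfa: "wf_nfa (rename_nfa f A)"
  unfolding wf_nfa_def
proof (intro conjI ballI)
  show "finite (states (rename_nfa f A))" "finite (alphabet (rename_nfa f A))"
    "initial (rename_nfa f A) \<subseteq> states (rename_nfa f A)"
    "final (rename_nfa f A) \<subseteq> states (rename_nfa f A)"
    using wf by (auto simp: wf_nfa_def)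
  fix q' a assume "q' \<in> states (rename_nfa f A)" "a \<in> alphabet (rename_nfa f A)"
  then obtain q where "q \<in> states A" "q' = f q" "a \<in> alphabet A" by auto
  moreover have "delta A q a \<subseteq> states A" using wf calculation unfolding wf_nfa_def by blast
  ultimately show "delta (rename_nfa f A) q' a \<subseteq> states (rename_nfa f A)"
    by (auto simp: delta_rename_nfa)
qed

lemma reach_rename_nfa:
  "p \<in> states A \<Longrightarrow> q \<in> states A \<Longrightarrow> reach (rename_nfa f A) (f p) (f q) \<longleftrightarrow> reach A p q"
  by (simp add: reach_def mem_delta_star_rename_nfa_iff)

lemma rpoNFA_rename_nfa:
  assumes "rpoNFA A"
  shows "rpoNFA (rename_nfa f A)"
  unfolding rpoNFA_def poNFA_def
proof (intro conjI ballI impI wf_nfa_rename_nfa)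
  fix p' q' assume "p' \<in> states (rename_nfa f A)" "q' \<in> states (rename_nfa f A)"
    and "reach (rename_nfa f A) p' q' \<and> reach (rename_nfa f A) q' p'"
  then obtain p q where "p \<in> states A" "q \<in> states A" "p' = f p" "q' = f q"
    and "reach A p q" "reach A q p"
    using reach_rename_nfa by auto
  then show "p' = q'" using assms unfolding rpoNFA_def poNFA_def by blast
next
  fix q' a assume "q' \<in> states (rename_nfa f A)" "a \<in> alphabet (rename_nfa f A)"
    and loop: "q' \<in> delta (rename_nfa f A) q' a"
  then obtain q where q: "q \<in> states A" "q' = f q" and a: "a \<in> alphabet A" by auto
  then have "q \<in> delta A q a"
    using loop mem_delta_star_rename_nfa_iff[OF q(1) q(1), of "[a]"] by simp
  then have "delta A q a = {q}" using assms q(1) a unfolding rpoNFA_def by blast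
  then show "delta (rename_nfa f A) q' a = {q'}" using q by (simp add: delta_rename_nfa)
qed

lemma nfa_lang_rename_nfa: "nfa_lang (rename_nfa f A) = nfa_lang A"
proof -
  have "delta_star (rename_nfa f A) (f i) w \<inter> f ` final A = {} \<longleftrightarrow> delta_star A i w \<inter> final A = {}"
    if "i \<in> initial A" "w \<in> lists (alphabet A)" for i w
  proof -
    have "i \<in> states A" "final A \<subseteq> states A" using wf that(1) by (auto simp: wf_nfa_def)
    then have "delta_star (rename_nfa f A) (f i) w \<inter> f ` final A = f ` (delta_star A i w \<inter> final A)"
      using that(2) delta_star_rename_nfa delta_star_subset_states[OF wf] inj_on_image_Int[OF inj]
      by simp
    then show ?thesis by simp
  qed
  then show ?thesis unfolding nfa_lang_def by (simp cong: conj_cong bex_cong)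
qed

end

theorem theorem3:
  fixes \<Sigma> :: "'a set" and L :: "'a list set"
  assumes "finite \<Sigma>" and "regular \<Sigma> L"
  shows "R_trivial \<Sigma> L \<longleftrightarrow>
           (\<exists>A :: (nat, 'a) nfa. rpoNFA A \<and> alphabet A = \<Sigma> \<and> nfa_lang A = L)"
proof
  assume "R_trivial \<Sigma> L"
  then obtain k where k: "k_R_trivial \<Sigma> k L" unfolding R_trivial_def by blast
  let ?D = "prefix_subs_nfa \<Sigma> k L"
  have rpo: "rpoNFA ?D"
    using rpoNFA_prefix_subs_nfa[OF assms(1)] k by (simp add: k_R_trivial_def)
  then have wf: "wf_nfa ?D" and "finite (states ?D)"
    by (simp_all add: rpoNFA_def poNFA_def wf_nfa_def)
  then obtain f :: "'a list set set \<Rightarrow> nat" where f: "inj_on f (states ?D)"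
    using finite_imp_inj_to_nat_seg by blast
  have "rpoNFA (rename_nfa f ?D)" "nfa_lang (rename_nfa f ?D) = L"
    using rpoNFA_rename_nfa[OF wf f rpo] nfa_lang_rename_nfa[OF wf f] nfa_lang_prefix_subs_nfa[OF k]
    by simp_all
  moreover have "alphabet (rename_nfa f ?D) = \<Sigma>" by (simp add: prefix_subs_nfa_def)
  ultimately show "\<exists>A :: (nat, 'a) nfa. rpoNFA A \<and> alphabet A = \<Sigma> \<and> nfa_lang A = L"
    by blast
next
  assume "\<exists>A :: (nat, 'a) nfa. rpoNFA A \<and> alphabet A = \<Sigma> \<and> nfa_lang A = L"
  then show "R_trivial \<Sigma> L" using rpoNFA_R_trivial by blast
qed

end
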